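(* Let $\mathcal H$ be a well-structured preconditioner set. For all $A,B\in\mathcal S^d_{++}$, $$\|P_{\mathcal H}(B)-P_{\mathcal H}(A)\|_{\mathrm{op}}\le\|B-A\|_{\mathrm{op}}^{1/2}.$$
   Context: $\mathcal S^d_+$ (resp. $\mathcal S^d_{++}$) denotes the set of real symmetric positive semidefinite (resp. positive definite) $d\times d$ matrices; $\langle A,B\rangle=\operatorname{Tr}(A^\top B)$. A set $\mathcal H\subseteq\mathcal S_+^d$ is a well-structured preconditioner set if $\mathcal H=\mathcal S_+^d\cap\mathcal K$ for some set $\mathcal K$ of real $d\times d$ matrices that is closed under scalar multiplication, matrix addition and matrix multiplication and contains the identity $I_d$. For $M\in\mathcal S^d_{++}$, $P_{\mathcal H}(M):=\arg\min_{H\in\mathcal H\cap\mathcal S^d_{++}}\langle M,H^{-1}\rangle+\operatorname{Tr}(H)$ (the minimizer exists and is unique). $\|\cdot\|_{\mathrm{op}}$ is the spectral norm. *)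

theory Defs
  imports "HOL-Analysis.Analysis"
begin

definition sym_mat :: "real^'d^'d \<Rightarrow> bool" where
  "sym_mat A \<longleftrightarrow> transpose A = A"

definition psd :: "real^'d^'d \<Rightarrow> bool" where
  "psd A \<longleftrightarrow> sym_mat A \<and> (\<forall>x. 0 \<le> x \<bullet> (A *v x))"

definition pd :: "real^'d^'d \<Rightarrow> bool" where
  "pd A \<longleftrightarrow> sym_mat A \<and> (\<forall>x. x \<noteq> 0 \<longrightarrow> 0 < x \<bullet> (A *v x))"

definition frob_inner :: "real^'d^'d \<Rightarrow> real^'d^'d \<Rightarrow> real" where
  "frob_inner A B = trace (transpose A ** B)"

definition well_structured :: "(real^'d^'d) set \<Rightarrow> bool" where
  "well_structured \<H> \<longleftrightarrow> (\<exists>K :: (real^'d^'d) set.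
      (\<forall>c A. A \<in> K \<longrightarrow> c *\<^sub>R A \<in> K) \<and>
      (\<forall>A B. A \<in> K \<longrightarrow> B \<in> K \<longrightarrow> A + B \<in> K) \<and>
      (\<forall>A B. A \<in> K \<longrightarrow> B \<in> K \<longrightarrow> A ** B \<in> K) \<and>
      mat 1 \<in> K \<and>
      \<H> = {H. psd H} \<inter> K)"

definition precond_obj :: "real^'d^'d \<Rightarrow> real^'d^'d \<Rightarrow> real" where
  "precond_obj M H = frob_inner M (matrix_inv H) + trace H"

definition P_H :: "(real^'d^'d) set \<Rightarrow> real^'d^'d \<Rightarrow> real^'d^'d" where
  "P_H \<H> M = (THE H. H \<in> \<H> \<and> pd H \<and>
       (\<forall>H'. H' \<in> \<H> \<and> pd H' \<longrightarrow> precond_obj M H \<le> precond_obj M H'))"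

definition op_norm :: "real^'d^'d \<Rightarrow> real" where
  "op_norm A = onorm (\<lambda>x. A *v x)"

end

theory Submission
  imports Defs
begin

(* Write H = psd \<inter> K with K a unital matrix algebra, and let N(M) be the Frobenius-orthogonal
   projection of M onto the symmetric matrices of K.  K contains every polynomial, hence every
   function, of each of its symmetric members; in particular their spectral projectors, inverses
   and square roots.  Completing the square gives
     <M, H^-1> + tr H = tr((R - H) H^-1 (R - H)) + 2 tr R   for R = N(M)^(1/2),
   so P_H(M) = N(M)^(1/2).  Pairing with the spectral projectors of N(B) - N(A) = N(B - A) shows
   that each eigenvalue of N(B) - N(A) is an average of Rayleigh quotients of B - A, so
   ||N(B) - N(A)|| <= ||B - A||.  Finally ||R1 - R2||^2 <= ||R1^2 - R2^2|| for psd R1, R2, by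
   evaluating R1^2 - R2^2 on a unit eigenvector of R1 - R2. *)

section \<open>Spectral decomposition of symmetric matrices\<close>

definition outer_prod :: "real^'n \<Rightarrow> real^'n^'n" where
  "outer_prod b = (\<chi> i j. b$i * b$j)"

definition spectral_mat :: "(real^'n) set \<Rightarrow> (real^'n \<Rightarrow> real) \<Rightarrow> real^'n^'n" where
  "spectral_mat B h = (\<Sum>b\<in>B. h b *\<^sub>R outer_prod b)"

definition orthonormal :: "(real^'n) set \<Rightarrow> bool" where
  "orthonormal B \<longleftrightarrow> finite B \<and> (\<forall>b\<in>B. \<forall>c\<in>B. b \<bullet> c = (if b = c then 1 else 0))"

definition orthonormal_basis :: "(real^'n) set \<Rightarrow> bool" where
  "orthonormal_basis B \<longleftrightarrow> orthonormal B \<and> (\<forall>x. x = (\<Sum>b\<in>B. (b \<bullet> x) *\<^sub>R b))"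

lemma orthonormalD:
  assumes "orthonormal B"
  shows "finite B" "b \<in> B \<Longrightarrow> c \<in> B \<Longrightarrow> b \<bullet> c = (if b = c then 1 else 0)"
  using assms unfolding orthonormal_def by auto

lemma orthonormal_basisD:
  assumes "orthonormal_basis B"
  shows "orthonormal B" "x = (\<Sum>b\<in>B. (b \<bullet> x) *\<^sub>R b)"
  using assms unfolding orthonormal_basis_def by auto

lemma orthonormal_basis_finite: "orthonormal_basis B \<Longrightarrow> finite B"
  by (simp add: orthonormal_basis_def orthonormal_def)

lemma orthonormal_norm: "orthonormal B \<Longrightarrow> b \<in> B \<Longrightarrow> norm b = 1"
  using orthonormalD(2)[of B b b] by (simp add: norm_eq_1)

lemma orthonormal_inner_sum:
  assumes "orthonormal B" "b \<in> B"
  shows "b \<bullet> (\<Sum>c\<in>B. f c *\<^sub>R c) = f b"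
proof -
  have "b \<bullet> (\<Sum>c\<in>B. f c *\<^sub>R c) = (\<Sum>c\<in>B. if c = b then f c else 0)"
    unfolding inner_sum_right
    by (rule sum.cong) (use orthonormalD(2)[OF assms(1) assms(2)] in auto)
  also have "\<dots> = f b" using orthonormalD(1)[OF assms(1)] assms(2) by simp
  finally show ?thesis .
qed

lemma sum_matrix_vector_mult: "(\<Sum>i\<in>I. A i) *v x = (\<Sum>i\<in>I. A i *v x)"
  for A :: "'i \<Rightarrow> real^'n^'m"
  by (induction I rule: infinite_finite_induct) (auto simp: matrix_vector_mult_add_rdistrib)

lemma scaleR_matrix_vector_mult: "(c *\<^sub>R A) *v x = c *\<^sub>R (A *v x)" for A :: "real^'n^'m"
  by (simp add: vec_eq_iff matrix_vector_mult_def sum_distrib_left mult.assoc)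

lemma outer_prod_mult_vector: "outer_prod b *v x = (b \<bullet> x) *\<^sub>R b"
  by (simp add: outer_prod_def matrix_vector_mult_def inner_vec_def vec_eq_iff
      sum_distrib_left sum_distrib_right mult.commute mult.left_commute)

lemma spectral_mat_mult_vector: "spectral_mat B h *v x = (\<Sum>b\<in>B. (h b * (b \<bullet> x)) *\<^sub>R b)"
  unfolding spectral_mat_def
  by (simp add: sum_matrix_vector_mult scaleR_matrix_vector_mult outer_prod_mult_vector)

lemma spectral_mat_cong: "(\<And>b. b \<in> B \<Longrightarrow> h b = k b) \<Longrightarrow> spectral_mat B h = spectral_mat B k"
  unfolding spectral_mat_def by (rule sum.cong) auto

lemma spectral_mat_diff: "spectral_mat B (\<lambda>b. h b - k b) = spectral_mat B h - spectral_mat B k"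
  unfolding spectral_mat_def by (simp add: scaleR_diff_left sum_subtractf)

lemma spectral_mat_scaleR: "spectral_mat B (\<lambda>b. c * h b) = c *\<^sub>R spectral_mat B h"
  unfolding spectral_mat_def by (simp add: scaleR_sum_right)

lemma spectral_mat_sum: "spectral_mat B (\<lambda>b. \<Sum>i\<in>I. f i b) = (\<Sum>i\<in>I. spectral_mat B (f i))"
  unfolding spectral_mat_def by (simp add: scaleR_sum_left sum.swap[of _ B I])

lemma sym_mat_spectral_mat: "sym_mat (spectral_mat B h)"
proof -
  have "transpose (\<Sum>b\<in>B. f b) = (\<Sum>b\<in>B. transpose (f b))" for f :: "_ \<Rightarrow> real^'n^'n"
    by (induction B rule: infinite_finite_induct) (auto simp: transpose_def vec_eq_iff)
  then show ?thesis
    unfolding sym_mat_def spectral_mat_def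
    by (auto simp: transpose_def outer_prod_def vec_eq_iff mult.commute intro!: sum.cong)
qed

lemma spectral_mat_eigenvector:
  assumes B: "orthonormal B" and b: "b \<in> B"
  shows "spectral_mat B h *v b = h b *\<^sub>R b"
proof -
  have "spectral_mat B h *v b = (\<Sum>c\<in>B. (if c = b then h c else 0) *\<^sub>R c)"
    unfolding spectral_mat_mult_vector
    by (rule sum.cong) (use orthonormalD(2)[OF B _ b] in auto)
  also have "\<dots> = h b *\<^sub>R b"
    using orthonormalD(1)[OF B] b by (simp add: if_distrib[of "\<lambda>t. t *\<^sub>R _"] cong: if_cong)
  finally show ?thesis .
qed

lemma spectral_mat_mult:
  assumes "orthonormal B"
  shows "spectral_mat B h ** spectral_mat B k = spectral_mat B (\<lambda>b. h b * k b)"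
proof -
  have "(spectral_mat B h ** spectral_mat B k) *v x = spectral_mat B (\<lambda>b. h b * k b) *v x" for x
    by (simp add: spectral_mat_mult_vector orthonormal_inner_sum[OF assms] mult.assoc
        flip: matrix_vector_mul_assoc)
  then show ?thesis by (simp add: matrix_eq)
qed

lemma spectral_mat_one:
  assumes "orthonormal_basis B"
  shows "spectral_mat B (\<lambda>_. 1) = mat 1"
  by (simp add: matrix_eq spectral_mat_mult_vector flip: orthonormal_basisD(2)[OF assms])

lemma spectral_mat_quadratic_form:
  "x \<bullet> (spectral_mat B h *v x) = (\<Sum>b\<in>B. h b * (b \<bullet> x)\<^sup>2)"
  by (simp add: spectral_mat_mult_vector inner_sum_right power2_eq_square inner_commute mult.assoc)

lemma parseval:
  assumes "orthonormal_basis B"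
  shows "x \<bullet> x = (\<Sum>b\<in>B. (b \<bullet> x)\<^sup>2)"
  using spectral_mat_quadratic_form[of x B "\<lambda>_. 1"] by (simp add: spectral_mat_one[OF assms])

lemma norm_spectral_mat_mult_vector_le:
  assumes B: "orthonormal_basis B" and h: "\<And>b. b \<in> B \<Longrightarrow> \<bar>h b\<bar> \<le> c" and "0 \<le> c"
  shows "norm (spectral_mat B h *v x) \<le> c * norm x"
proof -
  have "(norm (spectral_mat B h *v x))\<^sup>2 = (\<Sum>b\<in>B. (h b)\<^sup>2 * (b \<bullet> x)\<^sup>2)"
    unfolding power2_norm_eq_inner spectral_mat_mult_vector[of B h x] inner_sum_left
    by (simp add: orthonormal_inner_sum[OF orthonormal_basisD(1)[OF B]] power2_eq_square mult_ac)
  also have "\<dots> \<le> (\<Sum>b\<in>B. c\<^sup>2 * (b \<bullet> x)\<^sup>2)"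
  proof (intro sum_mono mult_right_mono)
    fix b assume "b \<in> B"
    then have "\<bar>h b\<bar>\<^sup>2 \<le> c\<^sup>2" using h by (intro power_mono) auto
    then show "(h b)\<^sup>2 \<le> c\<^sup>2" by simp
  qed simp
  also have "\<dots> = c\<^sup>2 * (x \<bullet> x)"
    using parseval[OF B, of x] by (simp add: sum_distrib_left)
  also have "\<dots> = (c * norm x)\<^sup>2"
    by (simp add: power_mult_distrib power2_norm_eq_inner)
  finally have "(norm (spectral_mat B h *v x))\<^sup>2 \<le> (c * norm x)\<^sup>2" .
  then show ?thesis
    using \<open>0 \<le> c\<close> by (rule power2_le_imp_le[OF _ mult_nonneg_nonneg[OF _ norm_ge_zero]])
qed

lemma sym_mat_inner_commute:
  assumes "sym_mat X"
  shows "(X *v x) \<bullet> y = x \<bullet> (X *v y)"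
  using assms unfolding sym_mat_def by (metis dot_lmul_matrix vector_transpose_matrix)

lemma quadratic_nonpos_imp_linear_coeff_zero:
  fixes a c :: real
  assumes "\<And>t. 2 * t * a + t\<^sup>2 * c \<le> 0"
  shows "a = 0"
proof (rule ccontr)
  assume "a \<noteq> 0"
  define k where "k = \<bar>c\<bar> + 1"
  define t where "t = a / k"
  have "0 < k"
    by (simp add: k_def add_nonneg_pos)
  have "t\<^sup>2 * (1 - k) \<le> t\<^sup>2 * c"
    by (intro mult_left_mono) (auto simp: k_def)
  moreover have "2 * t * a + t\<^sup>2 * (1 - k) = a\<^sup>2 * (k + 1) / k\<^sup>2"
    using \<open>0 < k\<close> by (simp add: t_def field_simps power2_eq_square)
  moreover have "0 < a\<^sup>2 * (k + 1) / k\<^sup>2"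
    using \<open>a \<noteq> 0\<close> \<open>0 < k\<close> by simp
  ultimately show False
    using assms[of t] by linarith
qed

text \<open>Moving \<open>v\<close> along the residual \<open>z = X v - (v \<bullet> X v) v\<close> would increase the
  Rayleigh quotient unless \<open>z = 0\<close>.\<close>
lemma rayleigh_maximizer_eigenvector:
  fixes X :: "real^'n^'n"
  assumes X: "sym_mat X" and W: "subspace W" and invariant: "\<And>w. w \<in> W \<Longrightarrow> X *v w \<in> W"
    and v: "v \<in> W" "v \<bullet> v = 1"
    and max: "\<And>w. w \<in> W \<Longrightarrow> w \<bullet> (X *v w) \<le> (v \<bullet> (X *v v)) * (w \<bullet> w)"
  shows "X *v v = (v \<bullet> (X *v v)) *\<^sub>R v"
proof -
  define m where "m = v \<bullet> (X *v v)"
  define z where "z = X *v v - m *\<^sub>R v"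
  have "z \<in> W" unfolding z_def using W v invariant by (intro subspace_diff subspace_scale) auto
  have "2 * t * (z \<bullet> z) + t\<^sup>2 * (z \<bullet> (X *v z) - m * (z \<bullet> z)) \<le> 0" for t
  proof -
    have "v + t *\<^sub>R z \<in> W" using W v \<open>z \<in> W\<close> by (intro subspace_add subspace_scale) auto
    from max[OF this] have "(v + t *\<^sub>R z) \<bullet> (X *v (v + t *\<^sub>R z))
        \<le> m * ((v + t *\<^sub>R z) \<bullet> (v + t *\<^sub>R z))" by (simp add: m_def)
    moreover have "v \<bullet> (X *v z) = z \<bullet> (X *v v)"
      using sym_mat_inner_commute[OF X, of v z] by (simp add: inner_commute)
    moreover have "z \<bullet> (X *v v) = z \<bullet> z + m * (z \<bullet> v)"
      by (simp add: z_def inner_diff_right inner_diff_left algebra_simps)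
    ultimately show ?thesis
      using v(2) by (simp add: m_def matrix_vector_right_distrib matrix_vector_mult_scaleR
          inner_add_left inner_add_right inner_commute power2_eq_square algebra_simps)
  qed
  then have "z \<bullet> z = 0" by (rule quadratic_nonpos_imp_linear_coeff_zero)
  then show ?thesis by (simp add: z_def m_def)
qed

lemma sym_mat_eigenvector_orthogonal:
  fixes X :: "real^'n^'n"
  assumes X: "sym_mat X" and eig: "\<And>b. b \<in> B \<Longrightarrow> X *v b = l b *\<^sub>R b"
    and r: "r \<noteq> 0" "\<And>b. b \<in> B \<Longrightarrow> b \<bullet> r = 0"
  obtains v where "\<And>b. b \<in> B \<Longrightarrow> b \<bullet> v = 0" "v \<bullet> v = 1" "X *v v = (v \<bullet> (X *v v)) *\<^sub>R v"
proof -
  define W where "W = {w. \<forall>b\<in>B. b \<bullet> w = 0}"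
  have W: "subspace W"
    unfolding W_def subspace_def by (simp add: inner_add_right)
  have invariant: "X *v w \<in> W" if "w \<in> W" for w
  proof -
    have "b \<bullet> (X *v w) = l b * (b \<bullet> w)" if "b \<in> B" for b
      using sym_mat_inner_commute[OF X, of b w] eig[OF that] by simp
    with \<open>w \<in> W\<close> show ?thesis by (simp add: W_def)
  qed
  have "closed W"
    unfolding W_def Collect_ball_eq by (intro closed_INT ballI closed_hyperplane)
  then have "compact (W \<inter> sphere 0 1)"
    using compact_Int_closed[OF compact_sphere] by (simp add: Int_commute)
  moreover have "r /\<^sub>R norm r \<in> W \<inter> sphere 0 1"
    using r by (simp add: W_def)
  moreover have "continuous_on (W \<inter> sphere 0 1) (\<lambda>w. w \<bullet> (X *v w))"
    by (intro continuous_intros linear_continuous_on matrix_vector_mul_bounded_linear)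
  ultimately obtain v where v: "v \<in> W \<inter> sphere 0 1"
    and vmax: "\<And>w. w \<in> W \<inter> sphere 0 1 \<Longrightarrow> w \<bullet> (X *v w) \<le> v \<bullet> (X *v v)"
    using continuous_attains_sup[of "W \<inter> sphere 0 1" "\<lambda>w. w \<bullet> (X *v w)"] by blast
  have "w \<bullet> (X *v w) \<le> (v \<bullet> (X *v v)) * (w \<bullet> w)" if "w \<in> W" for w
  proof (cases "w = 0")
    case False
    have "w /\<^sub>R norm w \<in> W \<inter> sphere 0 1"
      using that False W by (simp add: subspace_scale)
    from vmax[OF this] have "(w \<bullet> (X *v w)) / (norm w)\<^sup>2 \<le> v \<bullet> (X *v v)"
      by (simp add: matrix_vector_mult_scaleR power2_eq_square divide_inverse mult_ac)
    with False show ?thesis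
      by (simp add: pos_divide_le_eq dot_square_norm)
  qed simp
  then have "X *v v = (v \<bullet> (X *v v)) *\<^sub>R v"
    using v by (intro rayleigh_maximizer_eigenvector[OF X W invariant]) (auto simp: norm_eq_1)
  moreover have "v \<bullet> v = 1" "\<And>b. b \<in> B \<Longrightarrow> b \<bullet> v = 0"
    using v by (auto simp: W_def norm_eq_1)
  ultimately show ?thesis using that by blast
qed

lemma orthonormal_card_le: "orthonormal B \<Longrightarrow> card B \<le> CARD('n)"
  for B :: "(real^'n) set"
proof -
  assume B: "orthonormal B"
  then have "pairwise orthogonal B" "0 \<notin> B"
    using orthonormalD(2)[OF B] unfolding pairwise_def orthogonal_def by force+
  then have "independent B" by (rule pairwise_orthogonal_independent)
  then show ?thesis using independent_bound by fastforce
qed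

lemma orthonormal_insert:
  assumes "orthonormal B" "v \<bullet> v = 1" "\<And>b. b \<in> B \<Longrightarrow> b \<bullet> v = 0"
  shows "orthonormal (insert v B)"
  using assms unfolding orthonormal_def by (auto simp: inner_commute)

lemma eigenbasis_spectral_mat:
  fixes X :: "real^'n^'n"
  assumes B: "orthonormal_basis B" and eig: "\<And>b. b \<in> B \<Longrightarrow> X *v b = (b \<bullet> (X *v b)) *\<^sub>R b"
  shows "X = spectral_mat B (\<lambda>b. b \<bullet> (X *v b))"
proof -
  define l where "l = (\<lambda>b. b \<bullet> (X *v b))"
  have eig_l: "X *v b = l b *\<^sub>R b" if "b \<in> B" for b
    unfolding l_def using that by (rule eig)
  have "X *v x = spectral_mat B l *v x" for x
  proof -
    have "X *v x = X *v (\<Sum>b\<in>B. (b \<bullet> x) *\<^sub>R b)"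
      using orthonormal_basisD(2)[OF B] by (rule arg_cong)
    also have "\<dots> = (\<Sum>b\<in>B. (b \<bullet> x) *\<^sub>R (X *v b))"
      by (simp add: linear_sum[OF matrix_vector_mul_linear] matrix_vector_mult_scaleR)
    also have "\<dots> = spectral_mat B l *v x"
      unfolding spectral_mat_mult_vector
      by (rule sum.cong) (simp_all add: eig_l mult.commute)
    finally show ?thesis .
  qed
  then show ?thesis
    unfolding l_def[symmetric] by (simp add: matrix_eq)
qed

theorem sym_mat_spectral_decomposition:
  fixes X :: "real^'n^'n"
  assumes X: "sym_mat X"
  obtains B where "orthonormal_basis B" "X = spectral_mat B (\<lambda>b. b \<bullet> (X *v b))"
proof -
  define eigvecs where "eigvecs B \<longleftrightarrow> orthonormal B \<and> (\<forall>b\<in>B. X *v b = (b \<bullet> (X *v b)) *\<^sub>R b)"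
    for B
  have "eigvecs {}" by (simp add: eigvecs_def orthonormal_def)
  moreover have "\<forall>B. eigvecs B \<longrightarrow> card B < Suc CARD('n)"
    using orthonormal_card_le by (auto simp: eigvecs_def less_Suc_eq_le)
  ultimately obtain B where B: "eigvecs B" and Bmax: "\<And>B'. eigvecs B' \<Longrightarrow> card B' \<le> card B"
    using ex_has_greatest_nat[of eigvecs "{}" card "Suc CARD('n)"] by blast
  have onB: "orthonormal B" and eig: "\<And>b. b \<in> B \<Longrightarrow> X *v b = (b \<bullet> (X *v b)) *\<^sub>R b"
    using B by (auto simp: eigvecs_def)
  (* A maximal orthonormal set of eigenvectors spans: a nonzero residual would yield a further
     eigenvector orthogonal to it. *)
  have expansion: "x = (\<Sum>b\<in>B. (b \<bullet> x) *\<^sub>R b)" for x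
  proof (rule ccontr)
    define r where "r = x - (\<Sum>b\<in>B. (b \<bullet> x) *\<^sub>R b)"
    assume "x \<noteq> (\<Sum>b\<in>B. (b \<bullet> x) *\<^sub>R b)"
    then have "r \<noteq> 0" by (simp add: r_def)
    moreover have "b \<bullet> r = 0" if "b \<in> B" for b
      using orthonormal_inner_sum[OF onB that] by (simp add: r_def inner_diff_right)
    ultimately obtain v where v: "\<And>b. b \<in> B \<Longrightarrow> b \<bullet> v = 0" "v \<bullet> v = 1"
      "X *v v = (v \<bullet> (X *v v)) *\<^sub>R v"
      using sym_mat_eigenvector_orthogonal[OF X eig] by metis
    then have "v \<notin> B" by force
    have "eigvecs (insert v B)"
      using orthonormal_insert[OF onB v(2,1)] eig v(3) by (simp add: eigvecs_def)
    with Bmax[OF this] \<open>v \<notin> B\<close> orthonormalD(1)[OF onB] show False by simp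
  qed
  have basis: "orthonormal_basis B"
    unfolding orthonormal_basis_def using onB expansion by blast
  show ?thesis
    using basis eigenbasis_spectral_mat[OF basis eig] by (rule that)
qed

lemma inner_spectral_mat: "Z \<bullet> spectral_mat B h = (\<Sum>b\<in>B. h b * (b \<bullet> (Z *v b)))"
  for Z :: "real^'n^'n"
proof -
  have "Z \<bullet> outer_prod b = b \<bullet> (Z *v b)" for b
    by (simp add: inner_vec_def outer_prod_def matrix_vector_mult_def sum_distrib_left mult_ac)
  then show ?thesis by (simp add: spectral_mat_def inner_sum_right)
qed

section \<open>Positive definite matrices, traces and operator norms\<close>

lemma pd_imp_sym_mat: "pd A \<Longrightarrow> sym_mat A"
  by (simp add: pd_def)

lemma pd_imp_psd: "pd A \<Longrightarrow> psd A"
  unfolding pd_def psd_def by (metis inner_zero_left order.refl order.strict_implies_order)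

lemma sym_mat_diff: "sym_mat A \<Longrightarrow> sym_mat B \<Longrightarrow> sym_mat (A - B)"
  unfolding sym_mat_def by (simp add: transpose_def vec_eq_iff)

lemma sym_mat_add: "sym_mat A \<Longrightarrow> sym_mat B \<Longrightarrow> sym_mat (A + B)"
  unfolding sym_mat_def by (simp add: transpose_def vec_eq_iff)

lemma sym_mat_scaleR: "sym_mat A \<Longrightarrow> sym_mat (c *\<^sub>R A)"
  unfolding sym_mat_def by (simp add: transpose_scalar)

lemma sym_mat_zero: "sym_mat 0"
  unfolding sym_mat_def by (simp add: transpose_def vec_eq_iff)

lemma frob_inner_eq_inner: "frob_inner A B = A \<bullet> B"
proof -
  have "frob_inner A B = (\<Sum>i\<in>UNIV. \<Sum>k\<in>UNIV. A$k$i * B$k$i)"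
    by (simp add: frob_inner_def trace_def matrix_matrix_mult_def transpose_def)
  also have "\<dots> = (\<Sum>k\<in>UNIV. \<Sum>i\<in>UNIV. A$k$i * B$k$i)"
    by (rule sum.swap)
  also have "\<dots> = A \<bullet> B"
    by (simp add: inner_vec_def)
  finally show ?thesis .
qed

lemma matrix_diff_ldistrib: "A ** (B - C) = A ** B - A ** C" for A B C :: "real^'n^'n"
  by (simp add: matrix_eq matrix_vector_mult_diff_rdistrib matrix_vector_mult_diff_distrib
      flip: matrix_vector_mul_assoc)

lemma matrix_diff_rdistrib: "(A - B) ** C = A ** C - B ** C" for A B C :: "real^'n^'n"
  by (simp add: matrix_eq matrix_vector_mult_diff_rdistrib flip: matrix_vector_mul_assoc)

lemma norm_matrix_vector_mult_le_op_norm: "norm (A *v x) \<le> op_norm A * norm x"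
  unfolding op_norm_def by (rule onorm[OF matrix_vector_mul_bounded_linear])

lemma op_norm_nonneg: "0 \<le> op_norm A"
  unfolding op_norm_def by (rule onorm_pos_le[OF matrix_vector_mul_bounded_linear])

lemma abs_quadratic_form_le_op_norm:
  assumes "norm v = 1"
  shows "\<bar>v \<bullet> (A *v v)\<bar> \<le> op_norm A"
  using Cauchy_Schwarz_ineq2[of v "A *v v"] norm_matrix_vector_mult_le_op_norm[of A v] assms
  by simp

lemma op_norm_spectral_mat_le:
  assumes "orthonormal_basis B" "\<And>b. b \<in> B \<Longrightarrow> \<bar>h b\<bar> \<le> c" "0 \<le> c"
  shows "op_norm (spectral_mat B h) \<le> c"
  unfolding op_norm_def by (rule onorm_le) (rule norm_spectral_mat_mult_vector_le[OF assms])

lemma pd_spectral_mat: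
  assumes B: "orthonormal_basis B" and h: "\<And>b. b \<in> B \<Longrightarrow> 0 < h b"
  shows "pd (spectral_mat B h)"
  unfolding pd_def
proof (intro conjI allI impI sym_mat_spectral_mat)
  fix x :: "real^'a"
  assume "x \<noteq> 0"
  then have "0 < (\<Sum>b\<in>B. (b \<bullet> x)\<^sup>2)"
    by (simp flip: parseval[OF B])
  then obtain b where "b \<in> B" "b \<bullet> x \<noteq> 0"
    by (metis (mono_tags, lifting) less_irrefl power_zero_numeral sum.neutral)
  have "0 < (\<Sum>b\<in>B. h b * (b \<bullet> x)\<^sup>2)"
  proof (rule sum_pos2[OF orthonormal_basis_finite[OF B] \<open>b \<in> B\<close>])
    show "0 < h b * (b \<bullet> x)\<^sup>2"
      using h[OF \<open>b \<in> B\<close>] \<open>b \<bullet> x \<noteq> 0\<close> by simp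
    show "0 \<le> h c * (c \<bullet> x)\<^sup>2" if "c \<in> B" for c
      using h[OF that] by simp
  qed
  then show "0 < x \<bullet> (spectral_mat B h *v x)"
    by (simp add: spectral_mat_quadratic_form)
qed

lemma pd_spectral_decomposition:
  assumes "pd X"
  obtains B l where "orthonormal_basis B" "X = spectral_mat B l" "\<And>b. b \<in> B \<Longrightarrow> 0 < l b"
proof -
  obtain B where B: "orthonormal_basis B" "X = spectral_mat B (\<lambda>b. b \<bullet> (X *v b))"
    using sym_mat_spectral_decomposition[OF pd_imp_sym_mat[OF assms]] .
  have "0 < b \<bullet> (X *v b)" if "b \<in> B" for b
    using assms orthonormal_norm[OF orthonormal_basisD(1)[OF B(1)] that] unfolding pd_def
    by (metis norm_zero zero_neq_one)
  with B that show ?thesis by blast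
qed

lemma matrix_inv_eqI:
  fixes A A' :: "real^'n^'n"
  assumes "A ** A' = mat 1" "A' ** A = mat 1"
  shows "matrix_inv A = A'"
proof -
  have "matrix_inv A ** A = mat 1"
    unfolding matrix_inv_def by (rule someI2[of _ A']) (use assms in auto)
  have "matrix_inv A = (matrix_inv A ** A) ** A'"
    by (simp add: assms(1) flip: matrix_mul_assoc)
  also have "\<dots> = A'"
    by (simp add: \<open>matrix_inv A ** A = mat 1\<close>)
  finally show ?thesis .
qed

lemma spectral_mat_inverse:
  assumes B: "orthonormal_basis B" and h: "\<And>b. b \<in> B \<Longrightarrow> h b \<noteq> 0"
  shows "spectral_mat B h ** spectral_mat B (\<lambda>b. 1 / h b) = mat 1"
    "spectral_mat B (\<lambda>b. 1 / h b) ** spectral_mat B h = mat 1"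
  using h by (simp_all add: spectral_mat_mult[OF orthonormal_basisD(1)[OF B]]
      spectral_mat_one[OF B, symmetric] cong: spectral_mat_cong)

lemma matrix_inv_spectral_mat:
  assumes "orthonormal_basis B" "\<And>b. b \<in> B \<Longrightarrow> h b \<noteq> 0"
  shows "matrix_inv (spectral_mat B h) = spectral_mat B (\<lambda>b. 1 / h b)"
  using spectral_mat_inverse[OF assms] by (rule matrix_inv_eqI)

lemma pd_matrix_inv:
  assumes "pd H"
  shows "pd (matrix_inv H)" "H ** matrix_inv H = mat 1" "matrix_inv H ** H = mat 1"
proof -
  obtain B l where B: "orthonormal_basis B" and H: "H = spectral_mat B l"
    and l: "\<And>b. b \<in> B \<Longrightarrow> 0 < l b"
    using pd_spectral_decomposition[OF assms] by blast
  have l0: "l b \<noteq> 0" if "b \<in> B" for b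
    using l[OF that] by simp
  have inv: "matrix_inv H = spectral_mat B (\<lambda>b. 1 / l b)"
    unfolding H using B l0 by (rule matrix_inv_spectral_mat)
  then show "pd (matrix_inv H)"
    using l by (simp add: pd_spectral_mat[OF B])
  show "H ** matrix_inv H = mat 1" "matrix_inv H ** H = mat 1"
    unfolding inv unfolding H by (simp_all only: spectral_mat_inverse[OF B l0])
qed

lemma trace_sandwich:
  fixes Y G :: "real^'n^'n"
  assumes "sym_mat Y"
  shows "trace (Y ** G ** Y) = (\<Sum>j\<in>UNIV. column j Y \<bullet> (G *v column j Y))"
proof -
  have Y: "Y$i$j = Y$j$i" for i j
    using assms unfolding sym_mat_def by (metis transpose_def vec_lambda_beta)
  have "(Y ** G ** Y)$j$j = column j Y \<bullet> (G *v column j Y)" for j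
  proof -
    have "(Y ** G ** Y)$j$j = (\<Sum>k\<in>UNIV. \<Sum>i\<in>UNIV. Y$i$j * G$i$k * Y$k$j)"
      by (simp add: matrix_matrix_mult_def sum_distrib_right Y[of j])
    also have "\<dots> = (\<Sum>i\<in>UNIV. \<Sum>k\<in>UNIV. Y$i$j * G$i$k * Y$k$j)"
      by (rule sum.swap)
    also have "\<dots> = column j Y \<bullet> (G *v column j Y)"
      by (simp add: inner_vec_def column_def matrix_vector_mult_def sum_distrib_left mult.assoc)
    finally show ?thesis .
  qed
  then show ?thesis
    unfolding trace_def by simp
qed

lemma pd_quadratic_form_nonneg: "pd G \<Longrightarrow> 0 \<le> x \<bullet> (G *v x)"
  unfolding pd_def by (cases "x = 0") (auto intro: less_imp_le)

lemma trace_sandwich_nonneg: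
  assumes "sym_mat Y" "pd G"
  shows "0 \<le> trace (Y ** G ** Y)"
  unfolding trace_sandwich[OF assms(1)]
  by (intro sum_nonneg pd_quadratic_form_nonneg[OF assms(2)])

lemma trace_sandwich_pos:
  assumes "sym_mat Y" "pd G" "Y \<noteq> 0"
  shows "0 < trace (Y ** G ** Y)"
proof -
  obtain j where "column j Y \<noteq> 0"
    using assms(3) by (auto simp: column_def vec_eq_iff)
  then have "0 < column j Y \<bullet> (G *v column j Y)"
    using assms(2) by (simp add: pd_def)
  then show ?thesis
    unfolding trace_sandwich[OF assms(1)]
    by (rule sum_pos2[OF finite UNIV_I]) (rule pd_quadratic_form_nonneg[OF assms(2)])
qed

lemma sq_eigenvalue_le_quadratic_form_square_diff:
  fixes R1 R2 :: "real^'n^'n"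
  assumes R1: "sym_mat R1" and R2: "psd R2" and v: "v \<bullet> v = 1"
    and eig: "(R1 - R2) *v v = \<mu> *\<^sub>R v" and "0 \<le> \<mu>"
  shows "\<mu>\<^sup>2 \<le> v \<bullet> ((R1 ** R1 - R2 ** R2) *v v)"
proof -
  define a b where "a = R1 *v v" and "b = R2 *v v"
  have "a = b + \<mu> *\<^sub>R v"
    using eig by (simp add: a_def b_def matrix_vector_mult_diff_rdistrib algebra_simps)
  have "v \<bullet> ((R1 ** R1 - R2 ** R2) *v v) = a \<bullet> a - b \<bullet> b"
    using sym_mat_inner_commute[OF R1, of v a] sym_mat_inner_commute[of R2 v b] R2
    by (simp add: a_def b_def psd_def matrix_vector_mult_diff_rdistrib inner_diff_right
        flip: matrix_vector_mul_assoc)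
  also have "\<dots> = 2 * \<mu> * (v \<bullet> b) + \<mu>\<^sup>2"
    unfolding \<open>a = b + \<mu> *\<^sub>R v\<close>
    by (simp add: inner_add_left inner_add_right v inner_commute power2_eq_square algebra_simps)
  finally show ?thesis
    using R2 \<open>0 \<le> \<mu>\<close> by (simp add: psd_def b_def)
qed

text \<open>Testing \<open>R1\<^sup>2 - R2\<^sup>2\<close> on a unit eigenvector of \<open>R1 - R2\<close> bounds the square of
  each eigenvalue of \<open>R1 - R2\<close>; for a negative eigenvalue swap the roles of \<open>R1\<close> and \<open>R2\<close>.\<close>
theorem op_norm_diff_le_sqrt_op_norm_square_diff:
  fixes R1 R2 :: "real^'n^'n"
  assumes R1: "psd R1" and R2: "psd R2"
  shows "op_norm (R1 - R2) \<le> sqrt (op_norm (R1 ** R1 - R2 ** R2))"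
proof -
  have sym: "sym_mat R1" "sym_mat R2"
    using R1 R2 by (simp_all add: psd_def)
  define c where "c = op_norm (R1 ** R1 - R2 ** R2)"
  define l where "l = (\<lambda>b. b \<bullet> ((R1 - R2) *v b))"
  obtain B where B: "orthonormal_basis B" and decomp: "R1 - R2 = spectral_mat B l"
    using sym_mat_spectral_decomposition[OF sym_mat_diff[OF sym]] unfolding l_def by blast
  have "(l b)\<^sup>2 \<le> c" if "b \<in> B" for b
  proof -
    have v: "b \<bullet> b = 1" "norm b = 1"
      using orthonormal_norm[OF orthonormal_basisD(1)[OF B] that] by (simp_all add: norm_eq_1)
    have eig: "(R1 - R2) *v b = l b *\<^sub>R b"
      unfolding decomp by (rule spectral_mat_eigenvector[OF orthonormal_basisD(1)[OF B] that])
    have bound: "\<bar>b \<bullet> ((R1 ** R1 - R2 ** R2) *v b)\<bar> \<le> c"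
      unfolding c_def by (rule abs_quadratic_form_le_op_norm[OF v(2)])
    show ?thesis
    proof (cases "0 \<le> l b")
      case True
      with bound show ?thesis
        using sq_eigenvalue_le_quadratic_form_square_diff[OF sym(1) R2 v(1) eig] by simp
    next
      case False
      have "(R2 - R1) *v b = (- l b) *\<^sub>R b"
        using eig by (simp add: matrix_vector_mult_diff_rdistrib algebra_simps)
      with False have "(- l b)\<^sup>2 \<le> b \<bullet> ((R2 ** R2 - R1 ** R1) *v b)"
        by (intro sq_eigenvalue_le_quadratic_form_square_diff[OF sym(2) R1 v(1)]) simp_all
      with bound show ?thesis
        by (simp add: matrix_vector_mult_diff_rdistrib inner_diff_right)
    qed
  qed
  moreover have "0 \<le> c"
    unfolding c_def by (rule op_norm_nonneg)
  ultimately have "op_norm (spectral_mat B l) \<le> sqrt c"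
    by (intro op_norm_spectral_mat_le[OF B]) (simp_all add: real_le_rsqrt)
  then show ?thesis
    by (simp add: decomp c_def)
qed

section \<open>Unital matrix algebras\<close>

locale matrix_algebra =
  fixes K :: "(real^'n^'n) set"
  assumes scaleR_closed: "A \<in> K \<Longrightarrow> c *\<^sub>R A \<in> K"
    and add_closed: "A \<in> K \<Longrightarrow> B \<in> K \<Longrightarrow> A + B \<in> K"
    and mult_closed: "A \<in> K \<Longrightarrow> B \<in> K \<Longrightarrow> A ** B \<in> K"
    and one_closed: "mat 1 \<in> K"

lemma well_structured_iff:
  "well_structured (\<H> :: (real^'n^'n) set) \<longleftrightarrow> (\<exists>K. matrix_algebra K \<and> \<H> = {H. psd H} \<inter> K)"
proof -
  have "matrix_algebra K \<longleftrightarrow> (\<forall>c A. A \<in> K \<longrightarrow> c *\<^sub>R A \<in> K) \<and>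
      (\<forall>A B. A \<in> K \<longrightarrow> B \<in> K \<longrightarrow> A + B \<in> K) \<and>
      (\<forall>A B. A \<in> K \<longrightarrow> B \<in> K \<longrightarrow> A ** B \<in> K) \<and> mat 1 \<in> K" for K :: "(real^'n^'n) set"
    unfolding matrix_algebra_def by auto
  then show ?thesis unfolding well_structured_def by simp
qed

context matrix_algebra
begin

lemma zero_closed: "0 \<in> K"
  using scaleR_closed[OF one_closed, of 0] by simp

lemma diff_closed: "A \<in> K \<Longrightarrow> B \<in> K \<Longrightarrow> A - B \<in> K"
  using add_closed[of A "(-1) *\<^sub>R B"] scaleR_closed[of B "-1"] by simp

lemma sum_closed: "(\<And>i. i \<in> I \<Longrightarrow> f i \<in> K) \<Longrightarrow> (\<Sum>i\<in>I. f i) \<in> K"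
  by (induction I rule: infinite_finite_induct) (auto simp: zero_closed add_closed)

lemma spectral_mat_prod_closed:
  assumes B: "orthonormal_basis B" and "spectral_mat B l \<in> K" and "finite F"
  shows "spectral_mat B (\<lambda>b. \<Prod>\<nu>\<in>F. l b - \<nu>) \<in> K"
  using \<open>finite F\<close>
proof (induction F rule: finite_induct)
  case empty
  then show ?case by (simp add: spectral_mat_one[OF B] one_closed)
next
  case (insert \<nu> F)
  have "spectral_mat B (\<lambda>b. l b - \<nu>) = spectral_mat B l - \<nu> *\<^sub>R mat 1"
    using spectral_mat_diff[of B l "\<lambda>_. \<nu>"] spectral_mat_scaleR[of B \<nu> "\<lambda>_. 1"]
    by (simp add: spectral_mat_one[OF B])
  also have "\<dots> \<in> K"
    using assms(2) by (intro diff_closed scaleR_closed one_closed)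
  finally have "spectral_mat B (\<lambda>b. l b - \<nu>) ** spectral_mat B (\<lambda>b. \<Prod>\<nu>\<in>F. l b - \<nu>) \<in> K"
    using insert.IH by (rule mult_closed)
  then show ?case
    using insert.hyps by (simp add: spectral_mat_mult[OF orthonormal_basisD(1)[OF B]])
qed

text \<open>Lagrange interpolation: the indicator of the eigenvalue \<open>\<mu>\<close> is a polynomial in the
  eigenvalues, so the spectral projector lies in \<open>K\<close>.\<close>
lemma spectral_projector_closed:
  assumes B: "orthonormal_basis B" and "spectral_mat B l \<in> K"
  shows "spectral_mat B (\<lambda>b. if l b = \<mu> then 1 else 0) \<in> K"
proof -
  define F where "F = l ` B - {\<mu>}"
  have "finite F"
    unfolding F_def using orthonormal_basis_finite[OF B] by simp
  define c where "c = (\<Prod>\<nu>\<in>F. \<mu> - \<nu>)"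
  have "c \<noteq> 0" unfolding c_def using \<open>finite F\<close> by (simp add: F_def)
  have "spectral_mat B (\<lambda>b. if l b = \<mu> then 1 else 0)
      = spectral_mat B (\<lambda>b. (1 / c) * (\<Prod>\<nu>\<in>F. l b - \<nu>))"
  proof (rule spectral_mat_cong)
    fix b assume "b \<in> B"
    then have "l b \<noteq> \<mu> \<Longrightarrow> (\<Prod>\<nu>\<in>F. l b - \<nu>) = 0"
      using \<open>finite F\<close> by (intro prod_zero) (auto simp: F_def)
    then show "(if l b = \<mu> then 1 else 0) = (1 / c) * (\<Prod>\<nu>\<in>F. l b - \<nu>)"
      using \<open>c \<noteq> 0\<close> by (auto simp: c_def)
  qed
  also have "\<dots> \<in> K"
    unfolding spectral_mat_scaleR
    by (intro scaleR_closed spectral_mat_prod_closed[OF assms \<open>finite F\<close>])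
  finally show ?thesis .
qed

lemma spectral_mat_fun_closed:
  assumes B: "orthonormal_basis B" and "spectral_mat B l \<in> K"
  shows "spectral_mat B (\<lambda>b. f (l b)) \<in> K"
proof -
  have "finite (l ` B)"
    using orthonormal_basis_finite[OF B] by simp
  then have "spectral_mat B (\<lambda>b. f (l b))
      = spectral_mat B (\<lambda>b. \<Sum>\<mu>\<in>l ` B. f \<mu> * (if l b = \<mu> then 1 else 0))"
    by (intro spectral_mat_cong) (simp add: if_distrib[of "\<lambda>t. f _ * t"] sum.delta cong: if_cong)
  also have "\<dots> = (\<Sum>\<mu>\<in>l ` B. f \<mu> *\<^sub>R spectral_mat B (\<lambda>b. if l b = \<mu> then 1 else 0))"
    by (simp add: spectral_mat_sum spectral_mat_scaleR)
  also have "\<dots> \<in> K"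
    by (intro sum_closed scaleR_closed spectral_projector_closed[OF assms])
  finally show ?thesis .
qed

subsection \<open>Projection onto the symmetric part and the preconditioner map\<close>

definition is_sym_projection :: "real^'n^'n \<Rightarrow> real^'n^'n \<Rightarrow> bool" where
  "is_sym_projection M N \<longleftrightarrow> N \<in> K \<and> sym_mat N \<and> (\<forall>W\<in>K. sym_mat W \<longrightarrow> (M - N) \<bullet> W = 0)"

lemma sym_projection_exists: "\<exists>N. is_sym_projection M N"
proof -
  define S where "S = {W \<in> K. sym_mat W}"
  have "subspace S"
    unfolding subspace_def S_def
    by (simp add: zero_closed add_closed scaleR_closed sym_mat_zero sym_mat_add sym_mat_scaleR)
  then obtain N Z where "N \<in> S" "\<And>W. W \<in> S \<Longrightarrow> orthogonal Z W" "M = N + Z"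
    using orthogonal_subspace_decomp_exists[of S M] by (metis span_eq_iff)
  then show ?thesis
    unfolding is_sym_projection_def S_def orthogonal_def by auto
qed

lemma sym_projection_diff:
  "is_sym_projection M1 N1 \<Longrightarrow> is_sym_projection M2 N2 \<Longrightarrow> is_sym_projection (M2 - M1) (N2 - N1)"
  unfolding is_sym_projection_def
  by (simp add: diff_closed sym_mat_diff inner_diff_left algebra_simps)

text \<open>The spectral projector \<open>Q\<close> of \<open>N\<close> for the eigenvalue \<open>\<mu>\<close> lies in \<open>K\<close>, so
  \<open>M \<bullet> Q = N \<bullet> Q\<close>: each eigenvalue of \<open>N\<close> is the average of the Rayleigh quotients of \<open>M\<close>
  over an orthonormal basis of its eigenspace.\<close>
lemma sym_projection_eigenspace_sum:
  assumes P: "is_sym_projection M N" and B: "orthonormal_basis B" and N: "N = spectral_mat B l"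
  shows "(\<Sum>b\<in>{b\<in>B. l b = \<mu>}. b \<bullet> (M *v b)) = \<mu> * card {b\<in>B. l b = \<mu>}"
proof -
  define Q where "Q = spectral_mat B (\<lambda>b. if l b = \<mu> then 1 else 0)"
  have "Q \<in> K"
    unfolding Q_def using P N
    by (intro spectral_projector_closed[OF B]) (simp add: is_sym_projection_def)
  then have "M \<bullet> Q = N \<bullet> Q"
    using P sym_mat_spectral_mat[of B] by (simp add: is_sym_projection_def Q_def inner_diff_left)
  have "X \<bullet> Q = (\<Sum>b\<in>{b\<in>B. l b = \<mu>}. b \<bullet> (X *v b))" for X
    unfolding Q_def inner_spectral_mat using orthonormal_basis_finite[OF B]
    by (simp add: sum.inter_filter if_distrib[of "\<lambda>t. t * _"] cong: if_cong)
  moreover have "b \<bullet> (N *v b) = l b" if "b \<in> B" for b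
    using spectral_mat_eigenvector[OF orthonormal_basisD(1)[OF B] that, of l]
      orthonormal_norm[OF orthonormal_basisD(1)[OF B] that] by (simp add: N norm_eq_1)
  ultimately show ?thesis
    using \<open>M \<bullet> Q = N \<bullet> Q\<close> by simp
qed

lemma pd_sym_projection:
  assumes M: "pd M" and P: "is_sym_projection M N"
  shows "pd N"
proof -
  define l where "l = (\<lambda>b. b \<bullet> (N *v b))"
  obtain B where B: "orthonormal_basis B" and N: "N = spectral_mat B l"
    using sym_mat_spectral_decomposition P unfolding l_def is_sym_projection_def by blast
  have "0 < l b" if "b \<in> B" for b
  proof -
    let ?E = "{c\<in>B. l c = l b}"
    have "b \<in> ?E" "finite ?E"
      using that orthonormal_basis_finite[OF B] by auto
    have "0 < c \<bullet> (M *v c)" if "c \<in> ?E" for c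
      using M orthonormal_norm[OF orthonormal_basisD(1)[OF B]] that unfolding pd_def
      by (metis (mono_tags, lifting) mem_Collect_eq norm_zero zero_neq_one)
    then have "0 < (\<Sum>c\<in>?E. c \<bullet> (M *v c))"
      using \<open>b \<in> ?E\<close> \<open>finite ?E\<close> by (intro sum_pos) auto
    then have "0 < l b * card ?E"
      unfolding sym_projection_eigenspace_sum[OF P B N] .
    then show ?thesis
      by (simp add: zero_less_mult_iff)
  qed
  then show ?thesis
    unfolding N by (rule pd_spectral_mat[OF B])
qed

lemma op_norm_sym_projection_le:
  assumes P: "is_sym_projection M N"
  shows "op_norm N \<le> op_norm M"
proof -
  define l where "l = (\<lambda>b. b \<bullet> (N *v b))"
  obtain B where B: "orthonormal_basis B" and N: "N = spectral_mat B l"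
    using sym_mat_spectral_decomposition P unfolding l_def is_sym_projection_def by blast
  have "\<bar>l b\<bar> \<le> op_norm M" if "b \<in> B" for b
  proof -
    let ?E = "{c\<in>B. l c = l b}"
    have "0 < card ?E"
      using that orthonormal_basis_finite[OF B] by (auto simp: card_gt_0_iff)
    have "\<bar>l b\<bar> * card ?E = \<bar>\<Sum>c\<in>?E. c \<bullet> (M *v c)\<bar>"
      by (simp add: sym_projection_eigenspace_sum[OF P B N] abs_mult)
    also have "\<dots> \<le> (\<Sum>c\<in>?E. \<bar>c \<bullet> (M *v c)\<bar>)"
      by (rule sum_abs)
    also have "\<dots> \<le> (\<Sum>c\<in>?E. op_norm M)"
      using orthonormal_norm[OF orthonormal_basisD(1)[OF B]]
      by (intro sum_mono abs_quadratic_form_le_op_norm) simp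
    also have "\<dots> = op_norm M * card ?E"
      by simp
    finally show ?thesis
      using \<open>0 < card ?E\<close> by simp
  qed
  then show ?thesis
    unfolding N by (intro op_norm_spectral_mat_le[OF B] op_norm_nonneg)
qed

lemma matrix_inv_closed:
  assumes "H \<in> K" "pd H"
  shows "matrix_inv H \<in> K"
proof -
  obtain B l where B: "orthonormal_basis B" and H: "H = spectral_mat B l"
    and l: "\<And>b. b \<in> B \<Longrightarrow> 0 < l b"
    using pd_spectral_decomposition[OF assms(2)] by blast
  have "matrix_inv H = spectral_mat B (\<lambda>b. 1 / l b)"
    unfolding H using l by (intro matrix_inv_spectral_mat[OF B]) (metis less_irrefl)
  also have "\<dots> \<in> K"
    using spectral_mat_fun_closed[OF B, of l "\<lambda>t. 1 / t"] assms(1) H by simp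
  finally show ?thesis .
qed

lemma pd_sqrt_closed:
  assumes "N \<in> K" "pd N"
  obtains R where "R \<in> K" "pd R" "R ** R = N"
proof -
  obtain B l where B: "orthonormal_basis B" and N: "N = spectral_mat B l"
    and l: "\<And>b. b \<in> B \<Longrightarrow> 0 < l b"
    using pd_spectral_decomposition[OF assms(2)] by blast
  define R where "R = spectral_mat B (\<lambda>b. sqrt (l b))"
  have "R \<in> K"
    unfolding R_def using spectral_mat_fun_closed[OF B, of l sqrt] assms(1) N by simp
  moreover have "pd R"
    unfolding R_def using l by (intro pd_spectral_mat[OF B]) simp
  moreover have "R ** R = N"
    unfolding R_def N spectral_mat_mult[OF orthonormal_basisD(1)[OF B]]
    using l by (intro spectral_mat_cong) (simp add: less_imp_le)
  ultimately show ?thesis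
    using that by blast
qed

text \<open>Completing the square: for \<open>R\<^sup>2 = N\<close>, the objective is \<open>2 tr R\<close> plus a term that
  is nonnegative and vanishes only at \<open>H = R\<close>.\<close>
lemma precond_obj_eq:
  assumes P: "is_sym_projection M N" and R: "R ** R = N" and H: "H \<in> K" "pd H"
  shows "precond_obj M H = trace ((R - H) ** matrix_inv H ** (R - H)) + 2 * trace R"
proof -
  define G where "G = matrix_inv H"
  have HG: "H ** G = mat 1" "G ** H = mat 1" and "sym_mat G"
    using pd_matrix_inv[OF H(2)] by (simp_all add: G_def pd_imp_sym_mat)
  have "G \<in> K"
    unfolding G_def using H by (rule matrix_inv_closed)
  then have "frob_inner M G = N \<bullet> G"
    using P \<open>sym_mat G\<close> by (simp add: is_sym_projection_def frob_inner_eq_inner inner_diff_left)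
  also have "\<dots> = trace (N ** G)"
    using P by (simp add: is_sym_projection_def sym_mat_def frob_inner_def flip: frob_inner_eq_inner)
  also have "\<dots> = trace (R ** (R ** G))"
    by (simp add: matrix_mul_assoc R)
  also have "\<dots> = trace (R ** G ** R)"
    by (rule trace_mul_sym)
  finally have obj: "frob_inner M G = trace (R ** G ** R)" .
  have "(R - H) ** G ** (R - H) = R ** G ** R - R - (R - H)"
    by (simp add: matrix_diff_ldistrib matrix_diff_rdistrib HG matrix_mul_assoc
        flip: matrix_mul_assoc[of R G H])
  then have "trace ((R - H) ** G ** (R - H)) = trace (R ** G ** R) - 2 * trace R + trace H"
    by (simp only: trace_sub)
  then show ?thesis
    unfolding precond_obj_def G_def[symmetric] obj by simp
qed

lemma P_H_eq:
  assumes \<H>: "\<H> = {H. psd H} \<inter> K" and P: "is_sym_projection M N"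
    and R: "R \<in> K" "pd R" "R ** R = N"
  shows "P_H \<H> M = R"
  unfolding P_H_def
proof (rule the_equality)
  note obj = precond_obj_eq[OF P R(3)]
  have sym: "sym_mat (R - H)" if "pd H" for H
    using R(2) that by (simp add: sym_mat_diff pd_imp_sym_mat)
  have "precond_obj M R \<le> precond_obj M H" if "H \<in> K" "pd H" for H
    using obj[OF that] obj[OF R(1,2)] trace_sandwich_nonneg[OF sym pd_matrix_inv(1)] that
    by (simp add: trace_def)
  then show "R \<in> \<H> \<and> pd R \<and> (\<forall>H'. H' \<in> \<H> \<and> pd H' \<longrightarrow> precond_obj M R \<le> precond_obj M H')"
    using R \<H> by (simp add: pd_imp_psd)
  fix H
  assume "H \<in> \<H> \<and> pd H \<and> (\<forall>H'. H' \<in> \<H> \<and> pd H' \<longrightarrow> precond_obj M H \<le> precond_obj M H')"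
  then have "H \<in> K" "pd H" "precond_obj M H \<le> precond_obj M R"
    using R \<H> by (auto simp: pd_imp_psd)
  then have "\<not> 0 < trace ((R - H) ** matrix_inv H ** (R - H))"
    using obj obj[OF R(1,2)] by (simp add: trace_def)
  then show "H = R"
    using trace_sandwich_pos[OF sym pd_matrix_inv(1)] \<open>pd H\<close> by auto
qed

lemma P_H_sqrt_sym_projection:
  assumes "\<H> = {H. psd H} \<inter> K" "pd M" "is_sym_projection M N"
  shows "psd (P_H \<H> M)" "P_H \<H> M ** P_H \<H> M = N"
proof -
  have "N \<in> K" "pd N"
    using assms(3) pd_sym_projection[OF assms(2,3)] by (simp_all add: is_sym_projection_def)
  then obtain R where "R \<in> K" "pd R" "R ** R = N"
    by (rule pd_sqrt_closed)
  with P_H_eq[OF assms(1,3)] show "psd (P_H \<H> M)" "P_H \<H> M ** P_H \<H> M = N"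
    by (simp_all add: pd_imp_psd)
qed

end

theorem lemmaA5:
  fixes \<H> :: "(real^'d^'d) set" and A B :: "real^'d^'d"
  assumes "well_structured \<H>" and "pd A" and "pd B"
  shows "op_norm (P_H \<H> B - P_H \<H> A) \<le> sqrt (op_norm (B - A))"
proof -
  obtain K where "matrix_algebra K" and \<H>: "\<H> = {H. psd H} \<inter> K"
    using assms(1) well_structured_iff by blast
  interpret matrix_algebra K by fact
  obtain NA NB where PA: "is_sym_projection A NA" and PB: "is_sym_projection B NB"
    using sym_projection_exists by metis
  note RA = P_H_sqrt_sym_projection[OF \<H> assms(2) PA]
  note RB = P_H_sqrt_sym_projection[OF \<H> assms(3) PB]
  have "op_norm (P_H \<H> B - P_H \<H> A) \<le> sqrt (op_norm (NB - NA))"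
    using op_norm_diff_le_sqrt_op_norm_square_diff[OF RB(1) RA(1)] by (simp add: RA(2) RB(2))
  also have "\<dots> \<le> sqrt (op_norm (B - A))"
    using op_norm_sym_projection_le[OF sym_projection_diff[OF PA PB]] by simp
  finally show ?thesis .
qed

end
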